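(* Let $G=(V,E)$ be a finite simple graph and let $x$ be a maximum cost construction sequence for $G$ (i.e. $\nu(x)=\nu^*(G)$). If $(v_1,\dots,v_n)$ is the order in which the vertices of $G$ appear in $x$, then $\deg(v_i)\ge\deg(v_{i+1})$ for all $1\le i<n$.
   Context: For a finite simple graph $G=(V,E)$ with $\ell=|V|+|E|$, a construction sequence (c-sequence) is a bijection $x:\{1,\dots,\ell\}\to V\sqcup E$ such that every edge $e=uw$ satisfies $x^{-1}(e)>\max\{x^{-1}(u),x^{-1}(w)\}$. The cost of $x$ is $\nu(x)=\sum_{e=uw\in E}\big(2x^{-1}(e)-x^{-1}(u)-x^{-1}(w)\big)$, and $\nu^*(G)$ is the maximum of $\nu(x)$ over all c-sequences for $G$. *)

theory Defs
  imports Main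
begin

definition simple_graph :: "'a set \<Rightarrow> 'a set set \<Rightarrow> bool" where
  "simple_graph V E \<longleftrightarrow> finite V \<and> (\<forall>e\<in>E. e \<subseteq> V \<and> card e = 2)"

definition degree :: "'a set set \<Rightarrow> 'a \<Rightarrow> nat" where
  "degree E v = card {e\<in>E. v \<in> e}"

(* A c-sequence x : {1..l} -> V \<sqcup> E is represented by its inverse
   pos = x^{-1} : V \<sqcup> E -> {1..l}, a bijection. *)
definition c_sequence :: "'a set \<Rightarrow> 'a set set \<Rightarrow> ('a + 'a set \<Rightarrow> nat) \<Rightarrow> bool" where
  "c_sequence V E pos \<longleftrightarrow>
     bij_betw pos (V <+> E) {1..card V + card E} \<and>
     (\<forall>e\<in>E. \<forall>u\<in>e. pos (Inl u) < pos (Inr e))"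

definition cost :: "'a set set \<Rightarrow> ('a + 'a set \<Rightarrow> nat) \<Rightarrow> int" where
  "cost E pos = (\<Sum>e\<in>E. 2 * int (pos (Inr e)) - (\<Sum>u\<in>e. int (pos (Inl u))))"

definition max_cost :: "'a set \<Rightarrow> 'a set set \<Rightarrow> int" where
  "max_cost V E = Max {cost E pos | pos. c_sequence V E pos}"

end

theory Submission
  imports Defs
begin

text \<open>Let \<open>u\<close> and \<open>w\<close> sit at positions \<open>p < q\<close> with no vertex in between. Moving \<open>w\<close> to
  position \<open>p\<close> and shifting everything at positions \<open>p, \<dots>, q - 1\<close> one step later yields
  again a c-sequence, because edges at positions before \<open>q\<close> never contain \<open>w\<close>. Edges only
  move later, \<open>u\<close> moves one step later and \<open>w\<close> at least one step earlier, so the cost grows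
  by at least \<open>deg w - deg u\<close>. Maximality therefore forces \<open>deg w \<le> deg u\<close>.\<close>

lemma simple_graph_finite_edges:
  assumes "simple_graph V E"
  shows "finite E"
  using assms unfolding simple_graph_def
  by (meson Pow_iff finite_Pow_iff finite_subset subsetI)

lemma c_sequence_pos_bounds:
  assumes "c_sequence V E pos" and "a \<in> V <+> E"
  shows "1 \<le> pos a" and "pos a \<le> card V + card E"
  using bij_betw_apply[of pos "V <+> E" "{1..card V + card E}" a] assms
  unfolding c_sequence_def by auto

lemma abs_cost_le:
  assumes "simple_graph V E" and "c_sequence V E pos"
  shows "\<bar>cost E pos\<bar> \<le> int (card E) * (2 * int (card V + card E))"
proof -
  let ?N = "int (card V + card E)"
  have edge_term: "\<bar>2 * int (pos (Inr e)) - (\<Sum>x\<in>e. int (pos (Inl x)))\<bar> \<le> 2 * ?N"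
    if e: "e \<in> E" for e
  proof -
    have "e \<subseteq> V" and "card e = 2" using assms(1) e unfolding simple_graph_def by auto
    then have "(\<Sum>x\<in>e. int (pos (Inl x))) \<le> 2 * ?N"
      using sum_bounded_above[of e "\<lambda>x. int (pos (Inl x))" ?N]
        c_sequence_pos_bounds(2)[OF assms(2)] by fastforce
    moreover have "int (pos (Inr e)) \<le> ?N"
      using c_sequence_pos_bounds(2)[OF assms(2) InrI[OF e]] by simp
    moreover have "0 \<le> (\<Sum>x\<in>e. int (pos (Inl x)))" by (simp add: sum_nonneg)
    ultimately show ?thesis by (simp add: abs_le_iff)
  qed
  have "\<bar>cost E pos\<bar> \<le> (\<Sum>e\<in>E. \<bar>2 * int (pos (Inr e)) - (\<Sum>x\<in>e. int (pos (Inl x)))\<bar>)"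
    unfolding cost_def by (rule sum_abs)
  also have "\<dots> \<le> int (card E) * (2 * ?N)"
    using sum_bounded_above[of E _ "2 * ?N"] edge_term by simp
  finally show ?thesis .
qed

lemma cost_le_max_cost:
  assumes "simple_graph V E" and "c_sequence V E pos"
  shows "cost E pos \<le> max_cost V E"
proof -
  define M where "M = int (card E) * (2 * int (card V + card E))"
  have "{cost E g | g. c_sequence V E g} \<subseteq> {-M..M}"
    using abs_cost_le[OF assms(1)] unfolding M_def by (fastforce simp: abs_le_iff)
  then have "finite {cost E g | g. c_sequence V E g}"
    using finite_subset by blast
  then show ?thesis
    unfolding max_cost_def using assms(2) by (auto intro: Max_ge)
qed

lemma cost_diff:
  "cost E f - cost E g =
     (\<Sum>e\<in>E. 2 * (int (f (Inr e)) - int (g (Inr e)))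
              - (\<Sum>x\<in>e. int (f (Inl x)) - int (g (Inl x))))"
  unfolding cost_def sum_subtractf[symmetric] by (intro sum.cong refl) (simp add: sum_subtractf)

lemma int_degree_eq_sum:
  assumes "finite E"
  shows "int (degree E v) = (\<Sum>e\<in>E. if v \<in> e then 1 else 0)"
  unfolding degree_def using assms by (simp add: sum.If_cases Int_def)

definition move_to :: "nat \<Rightarrow> nat \<Rightarrow> nat \<Rightarrow> nat" where
  "move_to p q i = (if i = q then p else if p \<le> i \<and> i < q then i + 1 else i)"

lemma bij_betw_move_to:
  assumes "1 \<le> p" and "p < q" and "q \<le> N"
  shows "bij_betw (move_to p q) {1..N} {1..N}"
proof -
  have "inj_on (move_to p q) {1..N}"
    unfolding inj_on_def move_to_def using assms(2) by auto
  moreover have "move_to p q ` {1..N} \<subseteq> {1..N}"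
    unfolding move_to_def using assms by auto
  ultimately show ?thesis
    unfolding bij_betw_def using endo_inj_surj[of "{1..N}"] by simp
qed

lemma move_to_strict_mono:
  assumes "p < q" and "i < j" and "j \<noteq> q"
  shows "move_to p q i < move_to p q j"
  using assms unfolding move_to_def by auto

lemma le_move_to:
  assumes "i \<noteq> q"
  shows "i \<le> move_to p q i"
  using assms unfolding move_to_def by auto

lemma c_sequence_move_to:
  assumes cs: "c_sequence V E pos" and w: "w \<in> V"
    and "1 \<le> p" and "p < pos (Inl w)"
  shows "c_sequence V E (move_to p (pos (Inl w)) \<circ> pos)"
  unfolding c_sequence_def
proof (intro conjI ballI)
  let ?N = "card V + card E" and ?q = "pos (Inl w)"
  have bij: "bij_betw pos (V <+> E) {1..?N}" using cs unfolding c_sequence_def by simp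
  moreover have "bij_betw (move_to p ?q) {1..?N} {1..?N}"
    using bij_betw_move_to[OF assms(3,4) c_sequence_pos_bounds(2)[OF cs InlI[OF w]]] .
  ultimately show "bij_betw (move_to p ?q \<circ> pos) (V <+> E) {1..?N}"
    by (rule bij_betw_trans)
  fix e z assume e: "e \<in> E" and z: "z \<in> e"
  have "pos (Inr e) \<noteq> ?q"
    using bij_betw_imp_inj_on[OF bij] e w by (metis InlI InrI inj_onD sum.distinct(2))
  then show "(move_to p ?q \<circ> pos) (Inl z) < (move_to p ?q \<circ> pos) (Inr e)"
    using cs e z assms(4) unfolding c_sequence_def by (simp add: move_to_strict_mono)
qed

lemma cost_move_to_ge:
  assumes sg: "simple_graph V E" and cs: "c_sequence V E pos"
    and u: "u \<in> V" and w: "w \<in> V" and uw: "pos (Inl u) < pos (Inl w)"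
    and adjacent: "\<not> (\<exists>z\<in>V. pos (Inl u) < pos (Inl z) \<and> pos (Inl z) < pos (Inl w))"
  shows "cost E pos + int (degree E w) - int (degree E u)
           \<le> cost E (move_to (pos (Inl u)) (pos (Inl w)) \<circ> pos)"
proof -
  let ?pos' = "move_to (pos (Inl u)) (pos (Inl w)) \<circ> pos"
  define shift where "shift a = int (?pos' a) - int (pos a)" for a
  have inj: "inj_on pos (V <+> E)"
    using cs bij_betw_imp_inj_on unfolding c_sequence_def by blast
  have vertex_shift: "shift (Inl x) \<le> (if x = u then 1 else 0) - (if x = w then 1 else 0)"
    if x: "x \<in> V" for x
  proof -
    have "pos (Inl x) = pos (Inl u) \<longleftrightarrow> x = u" and "pos (Inl x) = pos (Inl w) \<longleftrightarrow> x = w"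
      using inj_onD[OF inj] x u w by blast+
    then show ?thesis
      using adjacent x uw unfolding shift_def move_to_def by auto
  qed
  have edge_shift: "0 \<le> shift (Inr e)" if e: "e \<in> E" for e
  proof -
    have "pos (Inr e) \<noteq> pos (Inl w)"
      using inj_onD[OF inj] e w by (metis InlI InrI sum.distinct(2))
    then show ?thesis unfolding shift_def by (simp add: le_move_to)
  qed
  have edge_term: "(if w \<in> e then 1 else 0) - (if u \<in> e then 1 else 0)
                     \<le> 2 * shift (Inr e) - (\<Sum>x\<in>e. shift (Inl x))"
    if e: "e \<in> E" for e
  proof -
    have "e \<subseteq> V" and "finite e"
      using sg e unfolding simple_graph_def by (auto intro: card_ge_0_finite)
    then have "(\<Sum>x\<in>e. shift (Inl x))
                 \<le> (\<Sum>x\<in>e. (if x = u then 1 else 0) - (if x = w then 1 else 0))"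
      by (intro sum_mono vertex_shift) auto
    also have "\<dots> = (if u \<in> e then 1 else 0) - (if w \<in> e then 1 else 0)"
      using \<open>finite e\<close> by (simp add: sum_subtractf)
    finally show ?thesis using edge_shift[OF e] by linarith
  qed
  have "int (degree E w) - int (degree E u)
          = (\<Sum>e\<in>E. (if w \<in> e then 1 else 0) - (if u \<in> e then 1 else 0))"
    using simple_graph_finite_edges[OF sg] by (simp add: int_degree_eq_sum sum_subtractf)
  also have "\<dots> \<le> (\<Sum>e\<in>E. 2 * shift (Inr e) - (\<Sum>x\<in>e. shift (Inl x)))"
    by (intro sum_mono edge_term)
  also have "\<dots> = cost E ?pos' - cost E pos"
    unfolding cost_diff shift_def ..
  finally show ?thesis by linarith
qed

theorem lemma3:
  fixes V :: "'a set" and E :: "'a set set" and pos :: "'a + 'a set \<Rightarrow> nat"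
  assumes "simple_graph V E"
    and "c_sequence V E pos"
    and "cost E pos = max_cost V E"
    and "u \<in> V" and "w \<in> V"
    and "pos (Inl u) < pos (Inl w)"
    and "\<not> (\<exists>z\<in>V. pos (Inl u) < pos (Inl z) \<and> pos (Inl z) < pos (Inl w))"
  shows "degree E u \<ge> degree E w"
proof -
  let ?pos' = "move_to (pos (Inl u)) (pos (Inl w)) \<circ> pos"
  have "1 \<le> pos (Inl u)"
    using c_sequence_pos_bounds(1)[OF assms(2) InlI[OF assms(4)]] .
  then have "c_sequence V E ?pos'"
    using c_sequence_move_to[OF assms(2,5)] assms(6) by simp
  then have "cost E ?pos' \<le> cost E pos"
    using cost_le_max_cost[OF assms(1)] assms(3) by simp
  moreover have "cost E pos + int (degree E w) - int (degree E u) \<le> cost E ?pos'"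
    using cost_move_to_ge[OF assms(1,2,4-7)] .
  ultimately show ?thesis by linarith
qed

end
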